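(* Let $(X,T)$ be a topological dynamical system and $\mu$ a $T$-invariant Borel probability measure on $X$. Then $\mu$ has bounded complexity with respect to $\{d_n\}$ if and only if $T$ is $\mu$-equicontinuous.
   Context: A t.d.s. $(X,T)$ consists of a compact metric space $(X,d)$ and a continuous map $T\colon X\to X$. $d_n(x,y)=\max\{d(T^ix,T^iy)\colon 0\le i\le n-1\}$, $B_{d_n}(x,\varepsilon)=\{y\colon d_n(x,y)<\varepsilon\}$. For an invariant measure $\mu$, $\mathrm{span}_\mu(n,\varepsilon)=\min\{\#(F)\colon F\subset X,\ \mu(\bigcup_{x\in F}B_{d_n}(x,\varepsilon))>1-\varepsilon\}$; $\mu$ has bounded complexity with respect to $\{d_n\}$ if for every $\varepsilon>0$ there is a positive integer $C$ with $\mathrm{span}_\mu(n,\varepsilon)\le C$ for all $n\ge1$. A subset $K\subset X$ is equicontinuous if for every $\varepsilon>0$ there is $\delta>0$ with $d(T^nx,T^ny)<\varepsilon$ for all $n\ge0$ and all $x,y\in K$ with $d(x,y)<\delta$. $T$ is $\mu$-equicontinuous if for every $\tau>0$ there is an equicontinuous measurable $K\subset X$ with $\mu(K)>1-\tau$. *)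

theory Defs
  imports "HOL-Analysis.Analysis" "HOL-Probability.Probability"
begin

definition tds :: "'a::metric_space set \<Rightarrow> ('a \<Rightarrow> 'a) \<Rightarrow> bool" where
  "tds X T \<longleftrightarrow> compact X \<and> continuous_on X T \<and> T ` X \<subseteq> X"

definition bowen_dist :: "('a::metric_space \<Rightarrow> 'a) \<Rightarrow> nat \<Rightarrow> 'a \<Rightarrow> 'a \<Rightarrow> real" where
  "bowen_dist T n x y = Max (insert 0 {dist ((T ^^ i) x) ((T ^^ i) y) | i. i < n})"

definition bowen_ball :: "'a::metric_space set \<Rightarrow> ('a \<Rightarrow> 'a) \<Rightarrow> nat \<Rightarrow> 'a \<Rightarrow> real \<Rightarrow> 'a set" where
  "bowen_ball X T n x e = {y \<in> X. bowen_dist T n x y < e}"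

definition invariant_borel_prob :: "'a::metric_space set \<Rightarrow> ('a \<Rightarrow> 'a) \<Rightarrow> 'a measure \<Rightarrow> bool" where
  "invariant_borel_prob X T M \<longleftrightarrow> prob_space M \<and> sets M = sets (restrict_space borel X)
     \<and> T \<in> measurable M M \<and> distr M M T = M"

definition span_mu :: "'a::metric_space set \<Rightarrow> ('a \<Rightarrow> 'a) \<Rightarrow> 'a measure \<Rightarrow> nat \<Rightarrow> real \<Rightarrow> nat" where
  "span_mu X T M n e = (LEAST k. \<exists>F. F \<subseteq> X \<and> finite F \<and> card F = k \<and>
      measure M (\<Union>x\<in>F. bowen_ball X T n x e) > 1 - e)"

definition bounded_complexity :: "'a::metric_space set \<Rightarrow> ('a \<Rightarrow> 'a) \<Rightarrow> 'a measure \<Rightarrow> bool" where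
  "bounded_complexity X T M \<longleftrightarrow>
     (\<forall>e>0. \<exists>C::nat. C > 0 \<and> (\<forall>n\<ge>1. span_mu X T M n e \<le> C))"

definition equicontinuous_set :: "('a::metric_space \<Rightarrow> 'a) \<Rightarrow> 'a set \<Rightarrow> bool" where
  "equicontinuous_set T K \<longleftrightarrow>
     (\<forall>e>0. \<exists>d>0. \<forall>n::nat. \<forall>x\<in>K. \<forall>y\<in>K. dist x y < d \<longrightarrow> dist ((T ^^ n) x) ((T ^^ n) y) < e)"

definition mu_equicontinuous :: "('a::metric_space \<Rightarrow> 'a) \<Rightarrow> 'a measure \<Rightarrow> bool" where
  "mu_equicontinuous T M \<longleftrightarrow>
     (\<forall>tau>0. \<exists>K\<in>sets M. equicontinuous_set T K \<and> measure M K > 1 - tau)"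

end

theory Submission
  imports Defs
begin

text \<open>
  If \<open>T\<close> is equicontinuous on a set \<open>K\<close> of measure \<open>> 1 - \<epsilon>\<close>, one \<open>\<delta>\<close> works for all
  times, so finitely many \<open>\<delta>\<close>-balls centred in \<open>K\<close> lie inside Bowen balls of every length
  and bound \<open>span\<^sub>\<mu>(n, \<epsilon>)\<close> uniformly in \<open>n\<close>.

  Conversely, suppose that for every \<open>n\<close> some \<open>C\<close> Bowen balls of length \<open>n\<close> carry measure
  \<open>> 1 - \<epsilon>\<close>. By compactness the \<open>C\<close>-tuples of centres have a convergent subsequence, and the
  closed orbit balls \<open>{y. \<forall>k. d(T\<^sup>k c\<^sub>i, T\<^sup>k y) \<le> 2\<epsilon>}\<close> around the limit centres still carry
  measure \<open>\<ge> 1 - \<epsilon>\<close>. These balls are compact and pairwise either intersecting or a positive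
  distance apart, so on their union nearby points stay \<open>8\<epsilon>\<close>-close forever. Intersecting
  such unions along a summable sequence \<open>\<epsilon>\<^sub>k\<close> gives a set of measure close to \<open>1\<close> on which
  \<open>T\<close> is equicontinuous.
\<close>

lemma finite_image_lessThan:
  assumes "finite F" "F \<noteq> {}" "card F \<le> C"
  obtains f :: "nat \<Rightarrow> 'a" where "F = f ` {..<C}"
proof -
  obtain g where g: "bij_betw g {..<card F} F"
    using ex_bij_betw_nat_finite[OF assms(1)] by (auto simp: atLeast0LessThan)
  have "card F > 0" using assms(1,2) by auto
  have "(\<lambda>i. min i (card F - 1)) ` {..<C} = {..<card F}"
  proof (intro subset_antisym image_subsetI subsetI)
    show "min i (card F - 1) \<in> {..<card F}" for i using \<open>card F > 0\<close> by simp
    fix j assume "j \<in> {..<card F}"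
    then have "j = min j (card F - 1)" "j \<in> {..<C}" using assms(3) by auto
    then show "j \<in> (\<lambda>i. min i (card F - 1)) ` {..<C}" by blast
  qed
  then have "F = g ` ((\<lambda>i. min i (card F - 1)) ` {..<C})"
    using g by (simp add: bij_betw_def)
  also have "\<dots> = (\<lambda>i. g (min i (card F - 1))) ` {..<C}" by (simp add: image_image)
  finally have "F = (\<lambda>i. g (min i (card F - 1))) ` {..<C}" .
  then show thesis by (rule that)
qed

lemma seq_compact_common_subseq:
  fixes C :: nat and xs :: "nat \<Rightarrow> nat \<Rightarrow> 'a::topological_space"
  assumes "seq_compact X" "\<And>n i. i < C \<Longrightarrow> xs n i \<in> X"
  obtains r l where "strict_mono r" "\<And>i. i < C \<Longrightarrow> l i \<in> X" "\<And>i. i < C \<Longrightarrow> (\<lambda>n. xs (r n) i) \<longlonglongrightarrow> l i"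
proof -
  have "\<exists>r l. strict_mono r \<and> (\<forall>i<C. l i \<in> X \<and> (\<lambda>n. xs (r n) i) \<longlonglongrightarrow> l i)"
    using assms(2)
  proof (induction C)
    case 0
    show ?case by (rule exI[of _ id]) (simp add: strict_mono_def)
  next
    case (Suc C)
    then obtain r l where r: "strict_mono r" and l: "\<forall>i<C. l i \<in> X \<and> (\<lambda>n. xs (r n) i) \<longlonglongrightarrow> l i"
      by auto
    obtain a s where "a \<in> X" "strict_mono s" "((\<lambda>n. xs (r n) C) \<circ> s) \<longlonglongrightarrow> a"
      using seq_compactE[OF assms(1), of "\<lambda>n. xs (r n) C"] Suc.prems by auto
    moreover have "(\<lambda>n. xs (r (s n)) i) \<longlonglongrightarrow> l i" if "i < C" for i
      using LIMSEQ_subseq_LIMSEQ[of "\<lambda>n. xs (r n) i", OF _ \<open>strict_mono s\<close>] l that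
      by (simp add: comp_def)
    ultimately show ?case using r l strict_mono_o[OF r \<open>strict_mono s\<close>]
      by (intro exI[of _ "r \<circ> s"] exI[of _ "l(C := a)"]) (auto simp: less_Suc_eq comp_def)
  qed
  then show thesis using that by blast
qed

lemma separate_compact_compact:
  fixes A B :: "'a::metric_space set"
  assumes "compact A" "compact B" "A \<inter> B = {}"
  shows "\<exists>d>0. \<forall>x\<in>A. \<forall>y\<in>B. d \<le> dist x y"
proof (cases "A \<times> B = {}")
  case False
  have "continuous_on (A \<times> B) (\<lambda>p. dist (fst p) (snd p))"
    by (intro continuous_intros)
  then obtain p where p: "p \<in> A \<times> B" "\<forall>q\<in>A \<times> B. dist (fst p) (snd p) \<le> dist (fst q) (snd q)"
    using continuous_attains_inf[OF compact_Times[OF assms(1,2)] False] by blast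
  have "dist (fst p) (snd p) > 0" using p(1) assms(3) by auto
  with p(2) show ?thesis by (intro exI[of _ "dist (fst p) (snd p)"]) auto
qed (auto intro: exI[of _ 1])

lemma finite_Union_compact_uniform_bound:
  fixes Q :: "'i \<Rightarrow> 'a::metric_space set" and f :: "nat \<Rightarrow> 'a \<Rightarrow> 'b::metric_space"
  assumes "finite I" "\<And>i. i \<in> I \<Longrightarrow> compact (Q i)"
    and bound: "\<And>i y z n. i \<in> I \<Longrightarrow> y \<in> Q i \<Longrightarrow> z \<in> Q i \<Longrightarrow> dist (f n y) (f n z) \<le> r"
  obtains \<delta> where "\<delta> > 0" "\<And>y z n. y \<in> (\<Union>i\<in>I. Q i) \<Longrightarrow> z \<in> (\<Union>i\<in>I. Q i) \<Longrightarrow> dist y z < \<delta> \<Longrightarrow>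
    dist (f n y) (f n z) \<le> 2 * r"
proof -
  define P where "P = {(i, j) \<in> I \<times> I. Q i \<inter> Q j = {}}"
  have "\<forall>p\<in>P. \<exists>d>0. \<forall>y\<in>Q (fst p). \<forall>z\<in>Q (snd p). d \<le> dist y z"
    using separate_compact_compact assms(2) by (auto simp: P_def)
  then obtain d where d: "\<And>p. p \<in> P \<Longrightarrow> d p > 0"
    "\<And>p y z. p \<in> P \<Longrightarrow> y \<in> Q (fst p) \<Longrightarrow> z \<in> Q (snd p) \<Longrightarrow> d p \<le> dist y z"
    by (metis bchoice)
  have "finite P" using assms(1) unfolding P_def by (auto intro: finite_subset[of _ "I \<times> I"])
  \<comment> \<open>\<open>\<delta>\<close> is below the gap between any two disjoint pieces, so \<open>\<delta>\<close>-close points lie in pieces that meet\<close>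
  define \<delta> where "\<delta> = Min (insert 1 (d ` P))"
  have "\<delta> > 0" using \<open>finite P\<close> d(1) by (simp add: \<delta>_def)
  moreover have "dist (f n y) (f n z) \<le> 2 * r"
    if ij: "i \<in> I" "j \<in> I" "y \<in> Q i" "z \<in> Q j" "dist y z < \<delta>" for i j y z n
  proof (cases "(i, j) \<in> P")
    case True
    then have "\<delta> \<le> dist y z" using d(2)[OF True] ij \<open>finite P\<close>
      by (force simp: \<delta>_def intro: Min.coboundedI order_trans)
    with ij show ?thesis by linarith
  next
    case False
    then obtain w where "w \<in> Q i" "w \<in> Q j" using ij unfolding P_def by auto
    then have "dist (f n y) (f n w) + dist (f n w) (f n z) \<le> r + r"
      using bound ij by (intro add_mono) blast+
    then show ?thesis using dist_triangle[of "f n y" "f n z" "f n w"] by linarith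
  qed
  ultimately show thesis by (intro that[of \<delta>]) blast+
qed

lemma INT_UN_decseq_commute:
  assumes "finite I" "\<And>i. i \<in> I \<Longrightarrow> decseq (A i)"
  shows "(\<Inter>m. \<Union>i\<in>I. A i m) = (\<Union>i\<in>I. \<Inter>m. A i m)"
proof
  show "(\<Inter>m. \<Union>i\<in>I. A i m) \<subseteq> (\<Union>i\<in>I. \<Inter>m. A i m)"
  proof
    fix y assume y: "y \<in> (\<Inter>m. \<Union>i\<in>I. A i m)"
    show "y \<in> (\<Union>i\<in>I. \<Inter>m. A i m)"
    proof (rule ccontr)
      assume "y \<notin> (\<Union>i\<in>I. \<Inter>m. A i m)"
      then have "\<forall>i\<in>I. \<exists>m. y \<notin> A i m" by blast
      then obtain m where m: "\<And>i. i \<in> I \<Longrightarrow> y \<notin> A i (m i)" by metis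
      obtain N where N: "\<And>i. i \<in> I \<Longrightarrow> m i \<le> N"
        using finite_nat_set_iff_bounded_le[of "m ` I"] assms(1) by auto
      have "y \<notin> A i N" if "i \<in> I" for i
        using m[OF that] assms(2)[OF that, THEN decseqD, OF N[OF that]] by blast
      with y show False by blast
    qed
  qed
qed blast

lemma (in finite_measure) measure_INT_decseq_ge:
  assumes "range A \<subseteq> sets M" "decseq A" "\<And>m. a \<le> measure M (A m)"
  shows "a \<le> measure M (\<Inter>m. A m)"
  using LIMSEQ_le_const[OF finite_Lim_measure_decseq[OF assms(1,2)]] assms(3) by blast

lemma (in prob_space) prob_INT_ge:
  assumes A: "\<And>k. A k \<in> events" and le: "\<And>k. 1 - prob (A k) \<le> \<epsilon> k" and "summable \<epsilon>"
  shows "1 - (\<Sum>k. \<epsilon> k) \<le> prob (\<Inter>k. A k)"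
proof -
  have compl: "prob (space M - A k) \<le> \<epsilon> k" for k
    using prob_compl[OF A] le by simp
  have summable: "summable (\<lambda>k. prob (space M - A k))"
    using compl by (intro summable_comparison_test'[OF \<open>summable \<epsilon>\<close>, where N = 0]) simp
  have "prob (space M - (\<Inter>k. A k)) = prob (\<Union>k. space M - A k)" by simp
  also have "\<dots> \<le> (\<Sum>k. prob (space M - A k))"
    using A summable by (intro finite_measure_subadditive_countably) auto
  also have "\<dots> \<le> (\<Sum>k. \<epsilon> k)"
    using compl summable \<open>summable \<epsilon>\<close> by (rule suminf_le)
  finally show ?thesis using prob_compl[of "\<Inter>k. A k"] A by auto
qed

lemma sets_restrict_borel_openin:
  assumes "openin (top_of_set X) S"
  shows "S \<in> sets (restrict_space borel X)"
proof -
  obtain U where "open U" "S = X \<inter> U" using assms by (auto simp: openin_open)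
  then show ?thesis unfolding sets_restrict_space by auto
qed

lemma sets_restrict_borel_closed:
  "closed S \<Longrightarrow> S \<subseteq> X \<Longrightarrow> S \<in> sets (restrict_space borel X)"
  by (auto simp: sets_restrict_space image_iff intro!: bexI[of _ S])


section \<open>Bowen balls and the complexity function\<close>

lemma continuous_on_funpow:
  assumes "tds X T"
  shows "continuous_on X (T ^^ k)"
proof -
  have T: "continuous_on X T" "T ` X \<subseteq> X" using assms by (auto simp: tds_def)
  have "continuous_on X (T ^^ k) \<and> (T ^^ k) ` X \<subseteq> X"
  proof (induction k)
    case (Suc k)
    then have "continuous_on X (T \<circ> T ^^ k)"
      using T by (metis continuous_on_compose continuous_on_subset)
    with Suc T(2) show ?case by auto
  qed auto
  then show ?thesis ..
qed

lemma bowen_dist_less_iff: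
  "bowen_dist T n x y < e \<longleftrightarrow> 0 < e \<and> (\<forall>i<n. dist ((T ^^ i) x) ((T ^^ i) y) < e)"
proof -
  have "{dist ((T ^^ i) x) ((T ^^ i) y) | i. i < n} = (\<lambda>i. dist ((T ^^ i) x) ((T ^^ i) y)) ` {..<n}"
    by auto
  then show ?thesis unfolding bowen_dist_def by (subst Max_less_iff) auto
qed

lemma bowen_ball_eq:
  "bowen_ball X T n x e = {y \<in> X. 0 < e \<and> (\<forall>i<n. dist ((T ^^ i) x) ((T ^^ i) y) < e)}"
  by (simp add: bowen_ball_def bowen_dist_less_iff)

lemma bowen_ball_subset: "bowen_ball X T n x e \<subseteq> X"
  by (simp add: bowen_ball_def)

lemma centre_in_bowen_ball: "x \<in> X \<Longrightarrow> 0 < e \<Longrightarrow> x \<in> bowen_ball X T n x e"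
  by (simp add: bowen_ball_eq)

lemma openin_bowen_ball:
  assumes "tds X T"
  shows "openin (top_of_set X) (bowen_ball X T n x e)"
proof (cases "0 < e")
  case True
  have "bowen_ball X T n x e = (\<Inter>i<n. X \<inter> (T ^^ i) -` ball ((T ^^ i) x) e) \<inter> X"
    using True by (auto simp: bowen_ball_eq)
  also have "\<dots> = (\<Inter>i<n. X \<inter> (T ^^ i) -` ball ((T ^^ i) x) e) \<inter> topspace (top_of_set X)"
    by simp
  also have "openin (top_of_set X) \<dots>"
    using continuous_on_funpow[OF assms]
    by (intro openin_INT continuous_openin_preimage[where T = UNIV]) auto
  finally show ?thesis .
qed (simp add: bowen_ball_eq)

lemma openin_Union_bowen_ball:
  assumes "tds X T"
  shows "openin (top_of_set X) (\<Union>x\<in>F. bowen_ball X T n x e)"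
  using openin_bowen_ball[OF assms] by blast

lemma finite_bowen_ball_cover:
  assumes "tds X T" "0 < e"
  obtains F where "F \<subseteq> X" "finite F" "(\<Union>x\<in>F. bowen_ball X T n x e) = X"
proof -
  have "\<forall>x\<in>X. \<exists>U. open U \<and> bowen_ball X T n x e = X \<inter> U"
    using openin_bowen_ball[OF assms(1)] by (simp add: openin_open)
  then obtain U where U_open: "\<And>x. x \<in> X \<Longrightarrow> open (U x)"
    and U_eq: "\<And>x. x \<in> X \<Longrightarrow> bowen_ball X T n x e = X \<inter> U x"
    by (metis bchoice)
  have "X \<subseteq> (\<Union>x\<in>X. U x)"
  proof
    fix x assume "x \<in> X"
    then have "x \<in> X \<inter> U x" using centre_in_bowen_ball[OF _ assms(2)] U_eq by metis
    with \<open>x \<in> X\<close> show "x \<in> (\<Union>x\<in>X. U x)" by blast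
  qed
  moreover have "compact X" using assms(1) by (simp add: tds_def)
  ultimately obtain F where F: "F \<subseteq> X" "finite F" "X \<subseteq> (\<Union>x\<in>F. U x)"
    using U_open compactE_image by metis
  have "(\<Union>x\<in>F. bowen_ball X T n x e) = X \<inter> (\<Union>x\<in>F. U x)"
    using F(1) U_eq by (simp add: subset_iff)
  also have "\<dots> = X" using F(3) by blast
  finally have "(\<Union>x\<in>F. bowen_ball X T n x e) = X" .
  with F show thesis by (intro that)
qed

lemma invariant_borel_probD:
  assumes "invariant_borel_prob X T M"
  shows "prob_space M" and "sets M = sets (restrict_space borel X)" and "space M = X"
proof -
  show "prob_space M" and sets: "sets M = sets (restrict_space borel X)"
    using assms by (auto simp: invariant_borel_prob_def)
  show "space M = X"
    using sets_eq_imp_space_eq[OF sets] by (simp add: space_restrict_space)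
qed

lemma span_mu_le_card:
  assumes "F \<subseteq> X" "finite F" "1 - e < measure M (\<Union>x\<in>F. bowen_ball X T n x e)"
  shows "span_mu X T M n e \<le> card F"
  unfolding span_mu_def using assms by (intro Least_le) blast

lemma span_mu_attained:
  assumes "tds X T" "prob_space M" "space M = X" "0 < e"
  obtains F where "F \<subseteq> X" "finite F" "card F = span_mu X T M n e"
    "1 - e < measure M (\<Union>x\<in>F. bowen_ball X T n x e)"
proof -
  obtain F where "F \<subseteq> X" "finite F" "(\<Union>x\<in>F. bowen_ball X T n x e) = X"
    using finite_bowen_ball_cover[OF assms(1,4)] .
  moreover have "measure M X = 1"
    using prob_space.prob_space[OF assms(2)] assms(3) by simp
  ultimately have "\<exists>k F. F \<subseteq> X \<and> finite F \<and> card F = k \<and>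
      1 - e < measure M (\<Union>x\<in>F. bowen_ball X T n x e)"
    using assms(4) by auto
  then have "\<exists>F. F \<subseteq> X \<and> finite F \<and> card F = span_mu X T M n e \<and>
      1 - e < measure M (\<Union>x\<in>F. bowen_ball X T n x e)"
    unfolding span_mu_def by (rule LeastI_ex)
  with that show thesis by (elim exE conjE)
qed


section \<open>Equicontinuity implies bounded complexity\<close>

lemma equicontinuous_set_bowen_ball_cover:
  assumes "compact X" "K \<subseteq> X" "equicontinuous_set T K" "0 < e"
  obtains F where "F \<subseteq> K" "finite F" "\<And>n. K \<subseteq> (\<Union>x\<in>F. bowen_ball X T n x e)"
proof -
  obtain d where "d > 0"
    and d: "\<And>n x y. x \<in> K \<Longrightarrow> y \<in> K \<Longrightarrow> dist x y < d \<Longrightarrow> dist ((T ^^ n) x) ((T ^^ n) y) < e"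
    using assms(3,4) unfolding equicontinuous_set_def by metis
  have "compact (closure K)"
    using assms(1,2) compact_Int_closed[OF assms(1) closed_closure, of K]
    by (metis closure_minimal compact_imp_closed inf.absorb2)
  moreover have "closure K \<subseteq> (\<Union>x\<in>K. ball x d)"
    using \<open>d > 0\<close> by (force simp: closure_approachable)
  ultimately obtain F where F: "F \<subseteq> K" "finite F" "closure K \<subseteq> (\<Union>x\<in>F. ball x d)"
    by (elim compactE_image) auto
  have "K \<subseteq> (\<Union>x\<in>F. bowen_ball X T n x e)" for n
  proof
    fix y assume "y \<in> K"
    then have "y \<in> (\<Union>x\<in>F. ball x d)" using F(3) closure_subset by blast
    then obtain x where "x \<in> F" "dist x y < d" by auto
    with \<open>y \<in> K\<close> F(1) assms(2,4) d have "y \<in> bowen_ball X T n x e"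
      by (auto simp: bowen_ball_eq)
    with \<open>x \<in> F\<close> show "y \<in> (\<Union>x\<in>F. bowen_ball X T n x e)" by blast
  qed
  with F show thesis by (intro that)
qed

lemma bounded_complexity_if_mu_equicontinuous:
  assumes "tds X T" "invariant_borel_prob X T M" "mu_equicontinuous T M"
  shows "bounded_complexity X T M"
  unfolding bounded_complexity_def
proof (intro allI impI)
  fix e :: real assume "0 < e"
  interpret prob_space M using invariant_borel_probD(1)[OF assms(2)] .
  obtain K where K: "K \<in> sets M" "equicontinuous_set T K" "1 - e < measure M K"
    using assms(3) \<open>0 < e\<close> unfolding mu_equicontinuous_def by blast
  have "K \<subseteq> X" using sets.sets_into_space[OF K(1)] invariant_borel_probD(3)[OF assms(2)] by simp
  then obtain F where F: "F \<subseteq> K" "finite F" "\<And>n. K \<subseteq> (\<Union>x\<in>F. bowen_ball X T n x e)"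
    using equicontinuous_set_bowen_ball_cover assms(1) K(2) \<open>0 < e\<close> by (metis tds_def)
  have "span_mu X T M n e \<le> card F" for n
  proof (rule span_mu_le_card)
    show "F \<subseteq> X" "finite F" using F \<open>K \<subseteq> X\<close> by auto
    have "(\<Union>x\<in>F. bowen_ball X T n x e) \<in> sets M"
      unfolding invariant_borel_probD(2)[OF assms(2)]
      by (rule sets_restrict_borel_openin[OF openin_Union_bowen_ball[OF assms(1)]])
    from finite_measure_mono[OF F(3) this] K(3)
    show "1 - e < measure M (\<Union>x\<in>F. bowen_ball X T n x e)" by linarith
  qed
  then show "\<exists>C. 0 < C \<and> (\<forall>n\<ge>1. span_mu X T M n e \<le> C)"
    by (intro exI[of _ "max 1 (card F)"]) (auto simp: le_max_iff_disj)
qed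


section \<open>Bounded complexity implies equicontinuity\<close>

definition bowen_cball :: "'a set \<Rightarrow> ('a::metric_space \<Rightarrow> 'a) \<Rightarrow> nat \<Rightarrow> 'a \<Rightarrow> real \<Rightarrow> 'a set" where
  "bowen_cball X T n c r = {y \<in> X. \<forall>k<n. dist ((T ^^ k) c) ((T ^^ k) y) \<le> r}"

definition orbit_cball :: "'a set \<Rightarrow> ('a::metric_space \<Rightarrow> 'a) \<Rightarrow> 'a \<Rightarrow> real \<Rightarrow> 'a set" where
  "orbit_cball X T c r = {y \<in> X. \<forall>k. dist ((T ^^ k) c) ((T ^^ k) y) \<le> r}"

lemma bowen_cball_subset: "bowen_cball X T n c r \<subseteq> X"
  by (auto simp: bowen_cball_def)

lemma bowen_cball_antimono: "m \<le> n \<Longrightarrow> bowen_cball X T n c r \<subseteq> bowen_cball X T m c r"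
  by (auto simp: bowen_cball_def)

lemma orbit_cball_eq_INT: "orbit_cball X T c r = (\<Inter>n. bowen_cball X T n c r)"
  by (auto simp: orbit_cball_def bowen_cball_def)

lemma closed_bowen_cball:
  assumes "tds X T"
  shows "closed (bowen_cball X T n c r)"
proof -
  have "closed X" using assms by (simp add: tds_def compact_imp_closed)
  have "closed {y \<in> X. dist ((T ^^ k) c) ((T ^^ k) y) \<le> r}" for k
    using continuous_on_funpow[OF assms, of k] \<open>closed X\<close>
    by (intro continuous_on_closed_Collect_le continuous_intros) auto
  moreover have "bowen_cball X T n c r = X \<inter> (\<Inter>k<n. {y \<in> X. dist ((T ^^ k) c) ((T ^^ k) y) \<le> r})"
    by (auto simp: bowen_cball_def)
  ultimately show ?thesis using \<open>closed X\<close> by auto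
qed

lemma compact_orbit_cball:
  assumes "tds X T"
  shows "compact (orbit_cball X T c r)"
proof -
  have "orbit_cball X T c r = X \<inter> orbit_cball X T c r" by (auto simp: orbit_cball_def)
  also have "compact \<dots>"
    using assms closed_bowen_cball[OF assms] unfolding tds_def orbit_cball_eq_INT
    by (intro compact_Int_closed closed_INT) auto
  finally show ?thesis .
qed

lemma orbit_cball_dist_le:
  assumes "y \<in> orbit_cball X T c r" "z \<in> orbit_cball X T c r"
  shows "dist ((T ^^ n) y) ((T ^^ n) z) \<le> 2 * r"
proof -
  have "dist ((T ^^ n) c) ((T ^^ n) y) \<le> r" "dist ((T ^^ n) c) ((T ^^ n) z) \<le> r"
    using assms by (auto simp: orbit_cball_def)
  then show ?thesis using dist_triangle3[of "(T ^^ n) y" "(T ^^ n) z" "(T ^^ n) c"] by linarith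
qed

lemma bowen_ball_subset_bowen_cball:
  assumes "m \<le> n" "\<And>k. k < m \<Longrightarrow> dist ((T ^^ k) c) ((T ^^ k) x) \<le> s"
  shows "bowen_ball X T n x e \<subseteq> bowen_cball X T m c (s + e)"
proof
  fix y assume "y \<in> bowen_ball X T n x e"
  then have "y \<in> X" and y: "\<And>k. k < n \<Longrightarrow> dist ((T ^^ k) x) ((T ^^ k) y) < e"
    by (auto simp: bowen_ball_eq)
  have "dist ((T ^^ k) c) ((T ^^ k) y) \<le> s + e" if "k < m" for k
    using dist_triangle[of "(T ^^ k) c" "(T ^^ k) y" "(T ^^ k) x"] assms y[of k] that by force
  with \<open>y \<in> X\<close> show "y \<in> bowen_cball X T m c (s + e)" by (simp add: bowen_cball_def)
qed

lemma equicontinuous_set_if_orbit_cball_covers: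
  fixes C :: "nat \<Rightarrow> nat"
  assumes "tds X T" "r \<longlonglongrightarrow> 0" "\<And>k. K \<subseteq> (\<Union>i<C k. orbit_cball X T (c k i) (r k))"
  shows "equicontinuous_set T K"
  unfolding equicontinuous_set_def
proof (intro allI impI)
  fix \<epsilon> :: real assume "0 < \<epsilon>"
  have "\<forall>\<^sub>F k in sequentially. r k < \<epsilon> / 4"
    using assms(2) \<open>0 < \<epsilon>\<close> by (intro order_tendstoD(2)) auto
  then obtain k where "r k < \<epsilon> / 4" by (auto simp: eventually_sequentially)
  obtain \<delta> where "\<delta> > 0" and \<delta>: "\<And>y z n. y \<in> (\<Union>i<C k. orbit_cball X T (c k i) (r k)) \<Longrightarrow>
      z \<in> (\<Union>i<C k. orbit_cball X T (c k i) (r k)) \<Longrightarrow> dist y z < \<delta> \<Longrightarrow>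
      dist ((T ^^ n) y) ((T ^^ n) z) \<le> 2 * (2 * r k)"
    by (rule finite_Union_compact_uniform_bound[of "{..<C k}" "\<lambda>i. orbit_cball X T (c k i) (r k)"
          "\<lambda>n. T ^^ n" "2 * r k"])
       (auto simp: compact_orbit_cball[OF assms(1)] intro: orbit_cball_dist_le)
  have "dist ((T ^^ n) x) ((T ^^ n) y) < \<epsilon>" if "x \<in> K" "y \<in> K" "dist x y < \<delta>" for n x y
    using \<delta>[of x y n] assms(3)[of k] that \<open>r k < \<epsilon> / 4\<close> by force
  with \<open>\<delta> > 0\<close> show "\<exists>\<delta>>0. \<forall>n. \<forall>x\<in>K. \<forall>y\<in>K. dist x y < \<delta> \<longrightarrow> dist ((T ^^ n) x) ((T ^^ n) y) < \<epsilon>"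
    by blast
qed

lemma bowen_ball_cover_lessThan:
  assumes "tds X T" "prob_space M" "space M = X" "0 < e" "e < 1" "span_mu X T M n e \<le> C"
  obtains x where "\<And>i. i < C \<Longrightarrow> x i \<in> X" "1 - e < measure M (\<Union>i<C. bowen_ball X T n (x i) e)"
proof -
  obtain F where F: "F \<subseteq> X" "finite F" "card F = span_mu X T M n e"
    "1 - e < measure M (\<Union>x\<in>F. bowen_ball X T n x e)"
    using span_mu_attained[OF assms(1-4)] .
  have "F \<noteq> {}" using F(4) assms(5) by auto
  then obtain x where "F = x ` {..<C}"
    using finite_image_lessThan F(2,3) assms(6) by metis
  with F(1,4) show thesis by (intro that) (auto simp: image_image)
qed

lemma sets_Union_bowen_cball:
  fixes C :: nat
  assumes "tds X T"
  shows "(\<Union>i<C. bowen_cball X T m (c i) r) \<in> sets (restrict_space borel X)"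
  by (intro sets_restrict_borel_closed closed_UN)
     (auto intro: closed_bowen_cball[OF assms] dest: bowen_cball_subset[THEN subsetD])

lemma sets_Union_orbit_cball:
  fixes C :: nat
  assumes "tds X T"
  shows "(\<Union>i<C. orbit_cball X T (c i) r) \<in> sets (restrict_space borel X)"
  using compact_orbit_cball[OF assms]
  by (intro sets_restrict_borel_closed closed_UN) (auto intro: compact_imp_closed simp: orbit_cball_def)

lemma measure_Union_bowen_cball_ge:
  fixes C :: nat and x :: "nat \<Rightarrow> nat \<Rightarrow> 'a::metric_space"
  assumes "finite_measure M" "tds X T" "sets M = sets (restrict_space borel X)" "0 < e"
    and x: "\<And>n i. i < C \<Longrightarrow> x n i \<in> X" and c: "\<And>i. i < C \<Longrightarrow> c i \<in> X"
    and lim: "\<And>i. i < C \<Longrightarrow> (\<lambda>n. x n i) \<longlonglongrightarrow> c i"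
    and "\<And>n. n \<le> L n" and meas: "\<And>n. a < measure M (\<Union>i<C. bowen_ball X T (L n) (x n i) e)"
  shows "a \<le> measure M (\<Union>i<C. bowen_cball X T m (c i) (2 * e))"
proof -
  have "(\<lambda>n. (T ^^ k) (x n i)) \<longlonglongrightarrow> (T ^^ k) (c i)" if "i < C" for i k
    by (rule continuous_on_tendsto_compose[OF continuous_on_funpow[OF assms(2)] lim[OF that] c[OF that]])
       (use x[OF that] in simp)
  then have "(\<lambda>n. dist ((T ^^ k) (c i)) ((T ^^ k) (x n i))) \<longlonglongrightarrow> 0" if "i < C" for i k
    using tendsto_dist[OF tendsto_const, of _ "(T ^^ k) (c i)" sequentially "(T ^^ k) (c i)"] that
    by fastforce
  then have "\<forall>\<^sub>F n in sequentially. \<forall>i\<in>{..<C}. \<forall>k\<in>{..<m}. dist ((T ^^ k) (c i)) ((T ^^ k) (x n i)) < e"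
    using \<open>0 < e\<close> by (intro eventually_ball_finite ballI order_tendstoD(2)) auto
  moreover have "\<forall>\<^sub>F n in sequentially. m \<le> L n"
    unfolding eventually_sequentially using \<open>\<And>n. n \<le> L n\<close> le_trans by blast
  ultimately have "\<exists>n. (\<forall>i\<in>{..<C}. \<forall>k\<in>{..<m}. dist ((T ^^ k) (c i)) ((T ^^ k) (x n i)) < e) \<and> m \<le> L n"
    by (intro eventually_happens'[OF sequentially_bot] eventually_conj)
  then obtain n where n: "m \<le> L n" "\<And>i k. i < C \<Longrightarrow> k < m \<Longrightarrow> dist ((T ^^ k) (c i)) ((T ^^ k) (x n i)) < e"
    by auto
  have "bowen_ball X T (L n) (x n i) e \<subseteq> bowen_cball X T m (c i) (e + e)" if "i < C" for i
  proof (rule bowen_ball_subset_bowen_cball)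
    show "m \<le> L n" by (rule n(1))
    show "dist ((T ^^ k) (c i)) ((T ^^ k) (x n i)) \<le> e" if "k < m" for k
      using n(2)[OF \<open>i < C\<close> that] by simp
  qed
  then have "(\<Union>i<C. bowen_ball X T (L n) (x n i) e) \<subseteq> (\<Union>i<C. bowen_cball X T m (c i) (2 * e))"
    by (force simp only: mult_2)
  from finite_measure.finite_measure_mono[OF assms(1) this] meas[of n] show ?thesis
    using sets_Union_bowen_cball[OF assms(2)] assms(3) by fastforce
qed

lemma orbit_cball_cover:
  fixes C :: nat
  assumes "tds X T" "invariant_borel_prob X T M" "0 < e" "e < 1"
    and "\<And>n. 1 \<le> n \<Longrightarrow> span_mu X T M n e \<le> C"
  obtains c where "1 - e \<le> measure M (\<Union>i<C. orbit_cball X T (c i) (2 * e))"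
proof -
  interpret prob_space M using invariant_borel_probD(1)[OF assms(2)] .
  note sets = invariant_borel_probD(2)[OF assms(2)]
  have "\<forall>n. \<exists>x. (\<forall>i<C. x i \<in> X) \<and> 1 - e < measure M (\<Union>i<C. bowen_ball X T (Suc n) (x i) e)"
    using bowen_ball_cover_lessThan[OF assms(1) prob_space_axioms invariant_borel_probD(3)[OF assms(2)]
        assms(3,4) assms(5)]
    by (metis le_add1 plus_1_eq_Suc)
  then obtain xs where xs: "\<And>n i. i < C \<Longrightarrow> xs n i \<in> X"
    "\<And>n. 1 - e < measure M (\<Union>i<C. bowen_ball X T (Suc n) (xs n i) e)"
    by metis
  have "seq_compact X" using assms(1) by (simp add: tds_def compact_imp_seq_compact)
  then obtain r c where r: "strict_mono r" and c: "\<And>i. i < C \<Longrightarrow> c i \<in> X"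
    and lim: "\<And>i. i < C \<Longrightarrow> (\<lambda>n. xs (r n) i) \<longlonglongrightarrow> c i"
    using seq_compact_common_subseq xs(1) by metis
  define B where "B m = (\<Union>i<C. bowen_cball X T m (c i) (2 * e))" for m
  have B_sets: "B m \<in> sets M" for m
    unfolding B_def sets by (rule sets_Union_bowen_cball[OF assms(1)])
  have "1 - e \<le> measure M (B m)" for m
    unfolding B_def
    by (rule measure_Union_bowen_cball_ge[OF finite_measure_axioms assms(1) sets \<open>0 < e\<close>, where x = "\<lambda>n. xs (r n)"
          and L = "\<lambda>n. Suc (r n)"]) (use xs c lim seq_suble[OF r] in \<open>auto intro: le_SucI\<close>)
  moreover have "B n \<subseteq> B m" if "m \<le> n" for m n
    unfolding B_def by (intro UN_mono order_refl bowen_cball_antimono that)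
  then have "decseq B" by (simp add: decseq_def)
  ultimately have "1 - e \<le> measure M (\<Inter>m. B m)"
    using B_sets by (intro measure_INT_decseq_ge) auto
  also have "(\<Inter>m. B m) = (\<Union>i<C. orbit_cball X T (c i) (2 * e))"
    unfolding B_def orbit_cball_eq_INT
    by (intro INT_UN_decseq_commute) (auto simp: decseq_def bowen_cball_antimono)
  finally show thesis by (rule that)
qed

lemma mu_equicontinuous_if_orbit_cball_covers:
  assumes "tds X T" "invariant_borel_prob X T M"
    and covers: "\<And>e. 0 < e \<Longrightarrow> e < 1 \<Longrightarrow>
      \<exists>(C::nat) c. 1 - e \<le> measure M (\<Union>i<C. orbit_cball X T (c i) (2 * e))"
  shows "mu_equicontinuous T M"
  unfolding mu_equicontinuous_def
proof (intro allI impI)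
  fix \<tau> :: real assume "0 < \<tau>"
  interpret prob_space M using invariant_borel_probD(1)[OF assms(2)] .
  define t where "t = min \<tau> 1"
  define \<epsilon> where "\<epsilon> k = t / 4 * (1 / 2) ^ k" for k :: nat
  have "0 < t" "t \<le> 1" using \<open>0 < \<tau>\<close> by (auto simp: t_def)
  have \<epsilon>: "0 < \<epsilon> k" "\<epsilon> k < 1" for k
  proof -
    show "0 < \<epsilon> k" using \<open>0 < t\<close> by (simp add: \<epsilon>_def)
    have "\<epsilon> k \<le> t / 4" unfolding \<epsilon>_def using \<open>0 < t\<close> by (intro mult_left_le) (auto simp: power_le_one)
    then show "\<epsilon> k < 1" using \<open>t \<le> 1\<close> by linarith
  qed
  have "\<forall>k. \<exists>(C::nat) c. 1 - \<epsilon> k \<le> measure M (\<Union>i<C. orbit_cball X T (c i) (2 * \<epsilon> k))"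
    using covers \<epsilon> by blast
  then obtain C :: "nat \<Rightarrow> nat" and c
    where cover: "\<And>k. 1 - \<epsilon> k \<le> measure M (\<Union>i<C k. orbit_cball X T (c k i) (2 * \<epsilon> k))"
    by metis
  have "\<epsilon> sums (t / 4 * (1 / (1 - 1 / 2)))"
    unfolding \<epsilon>_def by (intro sums_mult geometric_sums) simp
  then have "summable \<epsilon>" and sum_\<epsilon>: "(\<Sum>k. \<epsilon> k) = t / 2"
    by (auto simp: sums_iff)
  define K where "K = (\<Inter>k. \<Union>i<C k. orbit_cball X T (c k i) (2 * \<epsilon> k))"
  have cover_sets: "(\<Union>i<C k. orbit_cball X T (c k i) (2 * \<epsilon> k)) \<in> events" for k
    unfolding invariant_borel_probD(2)[OF assms(2)] by (rule sets_Union_orbit_cball[OF assms(1)])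
  then have "K \<in> events"
    unfolding K_def by blast
  moreover have "1 - t / 2 \<le> prob K"
    unfolding K_def sum_\<epsilon>[symmetric] using cover_sets cover \<open>summable \<epsilon>\<close>
    by (intro prob_INT_ge) (auto simp: algebra_simps)
  moreover have "(\<lambda>k. 2 * \<epsilon> k) \<longlonglongrightarrow> 0"
    by (intro tendsto_mult_right_zero summable_LIMSEQ_zero \<open>summable \<epsilon>\<close>)
  then have "equicontinuous_set T K"
    unfolding K_def by (rule equicontinuous_set_if_orbit_cball_covers[OF assms(1)]) auto
  ultimately show "\<exists>K\<in>events. equicontinuous_set T K \<and> 1 - \<tau> < prob K"
    using \<open>0 < t\<close> by (auto simp: t_def)
qed

lemma mu_equicontinuous_if_bounded_complexity:
  assumes "tds X T" "invariant_borel_prob X T M" "bounded_complexity X T M"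
  shows "mu_equicontinuous T M"
proof (rule mu_equicontinuous_if_orbit_cball_covers[OF assms(1,2)])
  fix e :: real assume e: "0 < e" "e < 1"
  then obtain C :: nat where "\<And>n. 1 \<le> n \<Longrightarrow> span_mu X T M n e \<le> C"
    using assms(3) unfolding bounded_complexity_def by blast
  then obtain c where "1 - e \<le> measure M (\<Union>i<C. orbit_cball X T (c i) (2 * e))"
    by (rule orbit_cball_cover[OF assms(1,2) e])
  then show "\<exists>(C::nat) c. 1 - e \<le> measure M (\<Union>i<C. orbit_cball X T (c i) (2 * e))"
    by blast
qed

theorem mainTheorem7:
  fixes X :: "'a::metric_space set" and T :: "'a \<Rightarrow> 'a" and M :: "'a measure"
  assumes "tds X T"
    and "invariant_borel_prob X T M"
  shows "bounded_complexity X T M \<longleftrightarrow> mu_equicontinuous T M"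
  using mu_equicontinuous_if_bounded_complexity[OF assms]
    bounded_complexity_if_mu_equicontinuous[OF assms] by blast

end
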